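(* Let $A\in\mathbb{R}^{m\times n}$ and let $A=P_1-R_1+S_1=P_2-R_2+S_2$ be two double proper weak splittings of $A$. Let $\widehat{A}=(I-S_2P_1^{\dagger})A$ and $\widehat{P}=P_2$. If $\widehat{A}^{\dagger}\widehat{P}\geq 0$, $N(S_2)\supseteq N(P_2)$, $R(S_2)\subseteq R(P_2)$ and $1\notin\sigma(S_2P_1^{\dagger})$, then $\rho(W_{12})<1$, where $$W_{12}=\begin{pmatrix} P_2^{\dagger}R_2-P_2^{\dagger}S_2P_1^{\dagger}R_1 & P_2^{\dagger}S_2P_1^{\dagger}S_1\\ I & 0\end{pmatrix}.$$
   Context: For $M\in\mathbb{R}^{m\times n}$, $M^{\dagger}$ is its Moore–Penrose inverse, $R(M)$, $N(M)$ its range and null space; inequalities are entrywise; $\rho$ is the spectral radius, $\sigma$ the spectrum. A double splitting $A=P-R+S$ ($P,R,S\in\mathbb{R}^{m\times n}$) is a double proper splitting if $R(P)=R(A)$ and $N(P)=N(A)$; it is a double proper weak splitting if moreover $P^{\dagger}R\geq 0$ and $P^{\dagger}S\leq 0$. *)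

theory Defs
  imports "Jordan_Normal_Form.Spectral_Radius" "Jordan_Normal_Form.Matrix_Kernel"
begin

definition is_moore_penrose :: "real mat \<Rightarrow> real mat \<Rightarrow> bool" where
  "is_moore_penrose M X \<longleftrightarrow>
     X \<in> carrier_mat (dim_col M) (dim_row M) \<and>
     M * X * M = M \<and> X * M * X = X \<and>
     transpose_mat (M * X) = M * X \<and> transpose_mat (X * M) = X * M"

definition mp_inverse :: "real mat \<Rightarrow> real mat" where
  "mp_inverse M = (THE X. is_moore_penrose M X)"

definition mat_range :: "real mat \<Rightarrow> real vec set" where
  "mat_range M = {M *\<^sub>v x | x. x \<in> carrier_vec (dim_col M)}"

definition mat_null :: "real mat \<Rightarrow> real vec set" where
  "mat_null M = mat_kernel M"

definition mat_nonneg :: "real mat \<Rightarrow> bool" where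
  "mat_nonneg M \<longleftrightarrow> (\<forall>i < dim_row M. \<forall>j < dim_col M. M $$ (i,j) \<ge> 0)"

definition mat_nonpos :: "real mat \<Rightarrow> bool" where
  "mat_nonpos M \<longleftrightarrow> (\<forall>i < dim_row M. \<forall>j < dim_col M. M $$ (i,j) \<le> 0)"

definition double_proper_splitting :: "real mat \<Rightarrow> real mat \<Rightarrow> real mat \<Rightarrow> real mat \<Rightarrow> bool" where
  "double_proper_splitting A P R S \<longleftrightarrow>
     P \<in> carrier_mat (dim_row A) (dim_col A) \<and>
     R \<in> carrier_mat (dim_row A) (dim_col A) \<and>
     S \<in> carrier_mat (dim_row A) (dim_col A) \<and>
     A = P - R + S \<and> mat_range P = mat_range A \<and> mat_null P = mat_null A"

definition double_proper_weak_splitting :: "real mat \<Rightarrow> real mat \<Rightarrow> real mat \<Rightarrow> real mat \<Rightarrow> bool" where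
  "double_proper_weak_splitting A P R S \<longleftrightarrow>
     double_proper_splitting A P R S \<and>
     mat_nonneg (mp_inverse P * R) \<and> mat_nonpos (mp_inverse P * S)"

definition cmat :: "real mat \<Rightarrow> complex mat" where
  "cmat M = map_mat complex_of_real M"

end

theory Submission
  imports Defs
begin

(*
  Write M^+ for the Moore-Penrose inverse and B, C for the two upper blocks of W12. The sign
  conditions of the weak splittings give B >= 0 and C >= 0. Since N(P1) = N(A) = N(P2) lies in
  N(S2), we have S2 P1^+ P1 = S2, and then B + C = P2^+ (P2 - Ahat). The hypotheses on S2 and the
  spectral condition make Ahat = P2 - (P2 - Ahat) a proper splitting: R(Ahat) lies in R(P2)
  and N(Ahat) = N(P2), so Ahat^+ Ahat = P2^+ P2. For T = Ahat^+ P2 >= 0 and D = B + C this yields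
  T D = T - P2^+ P2 and P2^+ P2 D = D, which rule out a nonzero y >= 0 with y <= D y: for w = D y,
  T w <= T (D w) = T w - w, so 0 <= y <= w <= 0. Finally, an eigenvector (z1, z2) of W12 for an
  eigenvalue lam with |lam| >= 1 has z1 = lam z2, hence |z1| <= |lam| |z1| <= B |z1| + C |z2|
  <= D |z1|, so z1 = 0 and then z2 = 0.
*)

lemma assoc_mult_mat_dim:
  "dim_col A = dim_row B \<Longrightarrow> dim_col B = dim_row C \<Longrightarrow> A * B * C = A * (B * C)"
  by (rule assoc_mult_mat[of A "dim_row A" "dim_col A" B "dim_col B" C "dim_col C"]) auto

lemma assoc_mult_mat_vec_dim:
  "dim_col A = dim_row B \<Longrightarrow> dim_col B = dim_vec v \<Longrightarrow> (A * B) *\<^sub>v v = A *\<^sub>v (B *\<^sub>v v)"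
  by (rule assoc_mult_mat_vec[of A "dim_row A" "dim_col A" B "dim_col B" v]) auto

lemma transpose_mult_dim:
  "dim_col A = dim_row (B :: 'a :: comm_semiring_0 mat) \<Longrightarrow> (A * B)\<^sup>T = B\<^sup>T * A\<^sup>T"
  by (rule transpose_mult[of A "dim_row A" "dim_col A" B "dim_col B"]) auto

lemma eq_mat_mult_vecI:
  fixes M N :: "'a :: comm_ring_1 mat"
  assumes M: "M \<in> carrier_mat r c" and N: "N \<in> carrier_mat r c"
    and eq: "\<And>x. x \<in> carrier_vec c \<Longrightarrow> M *\<^sub>v x = N *\<^sub>v x"
  shows "M = N"
proof (rule eq_matI)
  fix i j assume "i < dim_row N" "j < dim_col N"
  moreover have "(M *\<^sub>v unit_vec c j) $ i = (N *\<^sub>v unit_vec c j) $ i" using eq by simp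
  ultimately show "M $$ (i,j) = N $$ (i,j)" using M N by simp
qed (use M N in auto)

lemma minus_vec_eq_0_iff:
  fixes v w :: "'a :: ab_group_add vec"
  assumes "v \<in> carrier_vec n" and "w \<in> carrier_vec n"
  shows "v - w = 0\<^sub>v n \<longleftrightarrow> v = w"
proof
  assume diff: "v - w = 0\<^sub>v n"
  show "v = w"
  proof (rule eq_vecI)
    fix i assume "i < dim_vec w"
    hence "(v - w) $ i = 0" "i < n" using diff assms by auto
    thus "v $ i = w $ i" using assms by simp
  qed (use assms in auto)
qed (use assms in auto)

lemma mat_eq_0_of_gram_eq_0:
  fixes D :: "real mat"
  assumes "D\<^sup>T * D = 0\<^sub>m (dim_col D) (dim_col D)"
  shows "D = 0\<^sub>m (dim_row D) (dim_col D)"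
proof (rule eq_matI)
  fix i j assume "i < dim_row (0\<^sub>m (dim_row D) (dim_col D) :: real mat)"
    and "j < dim_col (0\<^sub>m (dim_row D) (dim_col D) :: real mat)"
  hence i: "i < dim_row D" and j: "j < dim_col D" by auto
  have "(\<Sum>k\<in>{0..<dim_row D}. D $$ (k,j) * D $$ (k,j)) = (D\<^sup>T * D) $$ (j,j)"
    using j by (simp add: scalar_prod_def)
  also have "\<dots> = 0" using assms j by simp
  finally have "\<forall>k\<in>{0..<dim_row D}. D $$ (k,j) * D $$ (k,j) = 0"
    by (subst sum_nonneg_eq_0_iff[symmetric]) auto
  thus "D $$ (i,j) = 0\<^sub>m (dim_row D) (dim_col D) $$ (i,j)" using i j by auto
qed auto

lemma row_echelon_generalized_inverse_exists:
  fixes C :: "'a :: field mat"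
  assumes C: "C \<in> carrier_mat r c" and ref: "row_echelon_form C"
  shows "\<exists>H \<in> carrier_mat c r. C * H * C = C"
proof -
  from ref C obtain f where "pivot_fun C f c" unfolding row_echelon_form_def by auto
  note pf = pivot_funD[OF _ this, of r] C
  \<comment> \<open>Column i of H selects the pivot column of row i, so C * H is the identity on the pivot
    rows and vanishes on the zero rows.\<close>
  define H :: "'a mat" where "H = mat c r (\<lambda>(j,i). if f i < c \<and> j = f i then 1 else 0)"
  have H: "H \<in> carrier_mat c r" unfolding H_def by auto
  have CH: "(C * H) $$ (i,k) = (if f k < c \<and> i = k then 1 else 0)" if i: "i < r" and k: "k < r" for i k
  proof -
    have "(C * H) $$ (i,k) = (\<Sum>j\<in>{0..<c}. C $$ (i,j) * H $$ (j,k))"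
      using C H i k by (simp add: scalar_prod_def)
    also have "\<dots> = (\<Sum>j\<in>{0..<c}. if j = f k then (if f k < c then C $$ (i,j) else 0) else 0)"
      using k by (intro sum.cong) (auto simp: H_def)
    also have "\<dots> = (if f k < c then C $$ (i, f k) else 0)" by (simp add: sum.delta)
    finally show ?thesis using pf(4)[OF _ k] pf(5)[OF _ k _ i] C by auto
  qed
  have "C * H * C = C"
  proof (rule eq_matI)
    fix i l assume "i < dim_row C" and "l < dim_col C"
    hence i: "i < r" and l: "l < c" using C by auto
    have "(C * H * C) $$ (i,l) = (\<Sum>k\<in>{0..<r}. (C * H) $$ (i,k) * C $$ (k,l))"
      using C H i l by (simp add: scalar_prod_def del: assoc_mult_mat)
    also have "\<dots> = (\<Sum>k\<in>{0..<r}. if k = i then (if f i < c then C $$ (i,l) else 0) else 0)"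
      using i by (intro sum.cong) (auto simp: CH)
    also have "\<dots> = C $$ (i,l)"
    proof (cases "f i < c")
      case False
      hence "f i = c" using pf(1)[of i] i C by fastforce
      thus ?thesis using pf(2)[of i l] i l C by (simp add: sum.delta)
    qed (use i in \<open>simp add: sum.delta\<close>)
    finally show "(C * H * C) $$ (i,l) = C $$ (i,l)" .
  qed (use C H in auto)
  with H show ?thesis by blast
qed

lemma generalized_inverse_exists:
  fixes M :: "'a :: field mat"
  assumes M: "M \<in> carrier_mat r c"
  shows "\<exists>G \<in> carrier_mat c r. M * G * M = M"
proof -
  obtain C where gj: "gauss_jordan_single M = C" by blast
  note C = gauss_jordan_single(2-4)[OF M gj]
  then obtain P Q where PQ: "C = P * M" "P \<in> carrier_mat r r" "Q \<in> carrier_mat r r"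
    "P * Q = 1\<^sub>m r" "Q * P = 1\<^sub>m r"
    by blast
  obtain H where H: "H \<in> carrier_mat c r" and CHC: "C * H * C = C"
    using row_echelon_generalized_inverse_exists[OF C(1,2)] by blast
  have M_eq: "M = Q * C" using PQ M by (simp add: assoc_mult_mat[symmetric, of Q r r P r M c])
  have "P * (Q * C) = C" using PQ(2-4) C(1) by (simp add: assoc_mult_mat[symmetric, of P r r Q r C c])
  then have "M * (H * P) * M = Q * (C * H * C)"
    unfolding M_eq using PQ(2,3) C(1) H by (simp add: assoc_mult_mat_dim carrier_matD del: assoc_mult_mat)
  also have "\<dots> = M" using CHC M_eq by simp
  finally show ?thesis using H PQ by (intro bexI[of _ "H * P"]) auto
qed

lemma symmetric_generalized_inverse_exists:
  fixes K :: "'a :: field mat"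
  assumes K: "K \<in> carrier_mat n n" and sym: "K\<^sup>T = K"
  shows "\<exists>S \<in> carrier_mat n n. S\<^sup>T = S \<and> K * S * K = K"
proof -
  obtain G where G: "G \<in> carrier_mat n n" and KGK: "K * G * K = K"
    using generalized_inverse_exists[OF K] by blast
  note dims = carrier_matD[OF K] carrier_matD[OF G]
  have "K * G\<^sup>T * K = (K * G * K)\<^sup>T"
    using sym dims by (simp add: transpose_mult_dim assoc_mult_mat_dim del: assoc_mult_mat)
  hence KGTK: "K * G\<^sup>T * K = K" using KGK sym by simp
  define S where "S = G\<^sup>T * K * G"
  have "S\<^sup>T = S" unfolding S_def using sym dims
    by (simp add: transpose_mult_dim assoc_mult_mat_dim del: assoc_mult_mat)
  moreover have "K * S * K = (K * G\<^sup>T * K) * G * K" unfolding S_def using dims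
    by (simp add: assoc_mult_mat_dim del: assoc_mult_mat)
  hence "K * S * K = K" using KGTK KGK by simp
  moreover have "S \<in> carrier_mat n n" unfolding S_def using G K by auto
  ultimately show ?thesis by blast
qed

lemma least_squares_inverse_exists:
  fixes M :: "real mat"
  assumes M: "M \<in> carrier_mat r c"
  shows "\<exists>X \<in> carrier_mat c r. M * X * M = M \<and> (M * X)\<^sup>T = M * X"
proof -
  have "M\<^sup>T * M \<in> carrier_mat c c" "(M\<^sup>T * M)\<^sup>T = M\<^sup>T * M"
    using M by (auto simp: transpose_mult_dim)
  then obtain S where S: "S \<in> carrier_mat c c" "S\<^sup>T = S"
    and KSK: "M\<^sup>T * M * S * (M\<^sup>T * M) = M\<^sup>T * M"
    using symmetric_generalized_inverse_exists by blast
  define X where "X = S * M\<^sup>T"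
  define D where "D = M * X * M - M"
  note dims = carrier_matD[OF M] carrier_matD[OF S(1)]
  have D: "D \<in> carrier_mat r c" unfolding D_def X_def using dims by auto
  have MTD: "M\<^sup>T * D = 0\<^sub>m c c"
  proof -
    have "M\<^sup>T * D = M\<^sup>T * (M * X * M) - M\<^sup>T * M"
      unfolding D_def X_def using M S by (subst mult_minus_distrib_mat[of _ c r]) auto
    also have "M\<^sup>T * (M * X * M) = M\<^sup>T * M * S * (M\<^sup>T * M)"
      unfolding X_def using dims by (simp add: assoc_mult_mat_dim del: assoc_mult_mat)
    finally show ?thesis using KSK M by simp
  qed
  have X: "X \<in> carrier_mat c r" unfolding X_def using dims by auto
  \<comment> \<open>D is orthogonal to the columns of M while its own columns lie in the range of M.\<close>
  have "D\<^sup>T = (M * X * M)\<^sup>T - M\<^sup>T"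
    unfolding D_def using M X by (intro transpose_minus[of _ r c]) auto
  hence "D\<^sup>T * D = (M * X * M)\<^sup>T * D - M\<^sup>T * D"
    using M X D by (simp add: minus_mult_distrib_mat[of _ c r])
  also have "(M * X * M)\<^sup>T * D = M\<^sup>T * X\<^sup>T * (M\<^sup>T * D)"
    unfolding X_def using dims D by (simp add: transpose_mult_dim assoc_mult_mat_dim del: assoc_mult_mat)
  finally have "D\<^sup>T * D = 0\<^sub>m c c" using MTD dims D X_def by auto
  hence D0: "D = 0\<^sub>m r c" using mat_eq_0_of_gram_eq_0[of D] D by auto
  have "M * X * M = M"
  proof (rule eq_matI)
    fix i j assume ij: "i < dim_row M" "j < dim_col M"
    hence "D $$ (i,j) = 0" using D0 dims by simp
    thus "(M * X * M) $$ (i,j) = M $$ (i,j)" unfolding D_def using ij X dims by simp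
  qed (use X dims in auto)
  moreover have "(M * X)\<^sup>T = M * X"
    unfolding X_def using dims S(2) by (simp add: transpose_mult_dim assoc_mult_mat_dim del: assoc_mult_mat)
  ultimately show ?thesis using X by blast
qed

lemma moore_penrose_exists:
  fixes M :: "real mat"
  assumes M: "M \<in> carrier_mat r c"
  shows "\<exists>X. is_moore_penrose M X"
proof -
  obtain X1 where X1: "X1 \<in> carrier_mat c r" and MX1M: "M * X1 * M = M"
    and MX1: "(M * X1)\<^sup>T = M * X1"
    using least_squares_inverse_exists[OF M] by blast
  obtain X' where X': "X' \<in> carrier_mat r c" and MX'M: "M\<^sup>T * X' * M\<^sup>T = M\<^sup>T"
    and MX': "(M\<^sup>T * X')\<^sup>T = M\<^sup>T * X'"
    using least_squares_inverse_exists[of "M\<^sup>T"] M by auto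
  define Y where "Y = X'\<^sup>T"
  note dims = carrier_matD[OF M] carrier_matD[OF X1] carrier_matD[OF X']
  have MYM: "M * Y * M = M"
    using arg_cong[OF MX'M, of transpose_mat] unfolding Y_def using dims
    by (simp add: transpose_mult_dim assoc_mult_mat_dim del: assoc_mult_mat)
  have YM: "(Y * M)\<^sup>T = Y * M"
    using MX' unfolding Y_def using dims by (simp add: transpose_mult_dim)
  \<comment> \<open>Y is a {1,4}-inverse of M, and Y M X1 is the classical Moore-Penrose inverse built from a
    {1,4}- and a {1,3}-inverse.\<close>
  define X where "X = Y * M * X1"
  have "M * X = M * Y * M * X1" "X * M = Y * (M * X1 * M)"
    unfolding X_def using dims Y_def by (simp_all add: assoc_mult_mat_dim del: assoc_mult_mat)
  hence MX: "M * X = M * X1" and XM: "X * M = Y * M" using MYM MX1M by simp_all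
  have "X * M * X = Y * (M * Y * M) * X1"
    unfolding XM unfolding X_def using dims Y_def by (simp add: assoc_mult_mat_dim del: assoc_mult_mat)
  hence "X * M * X = X" using MYM unfolding X_def by simp
  moreover have "M * X * M = M" using MX MX1M by simp
  moreover have "X \<in> carrier_mat c r" unfolding X_def Y_def using dims by auto
  ultimately show ?thesis unfolding is_moore_penrose_def using MX XM MX1 YM M by auto
qed

lemma moore_penrose_unique:
  fixes M X Y :: "real mat"
  assumes X: "is_moore_penrose M X" and Y: "is_moore_penrose M Y"
  shows "X = Y"
proof -
  have Xc: "X \<in> carrier_mat (dim_col M) (dim_row M)" and MXM: "M * X * M = M"
    and XMX: "X * M * X = X" and MX: "(M * X)\<^sup>T = M * X" and XM: "(X * M)\<^sup>T = X * M"
    using X unfolding is_moore_penrose_def by blast+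
  have Yc: "Y \<in> carrier_mat (dim_col M) (dim_row M)" and MYM: "M * Y * M = M"
    and YMY: "Y * M * Y = Y" and MY: "(M * Y)\<^sup>T = M * Y" and YM: "(Y * M)\<^sup>T = Y * M"
    using Y unfolding is_moore_penrose_def by blast+
  note dims = carrier_matD[OF Xc] carrier_matD[OF Yc]
  have "X = X * (M * X)\<^sup>T" using XMX MX dims by (simp add: assoc_mult_mat_dim del: assoc_mult_mat)
  also have "\<dots> = X * (X\<^sup>T * (M * Y * M)\<^sup>T)" using MYM dims by (simp add: transpose_mult_dim)
  also have "\<dots> = X * (M * X)\<^sup>T * (M * Y)\<^sup>T"
    using dims by (simp add: transpose_mult_dim assoc_mult_mat_dim del: assoc_mult_mat)
  also have "\<dots> = X * M * X * M * Y" using MX MY dims by (simp add: assoc_mult_mat_dim del: assoc_mult_mat)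
  also have "\<dots> = X * M * Y" by (simp only: XMX)
  finally have X_eq: "X = X * M * Y" .
  have "Y = (Y * M)\<^sup>T * Y" using YMY YM by simp
  also have "\<dots> = (M * X * M)\<^sup>T * Y\<^sup>T * Y" using MXM dims by (simp add: transpose_mult_dim)
  also have "\<dots> = (X * M)\<^sup>T * (Y * M)\<^sup>T * Y"
    using dims by (simp add: transpose_mult_dim assoc_mult_mat_dim del: assoc_mult_mat)
  also have "\<dots> = X * M * (Y * M * Y)" using XM YM dims by (simp add: assoc_mult_mat_dim del: assoc_mult_mat)
  also have "\<dots> = X * M * Y" by (simp only: YMY)
  finally show ?thesis using X_eq by simp
qed

lemma mp_inverse_is_moore_penrose:
  assumes "M \<in> carrier_mat r c"
  shows "is_moore_penrose M (mp_inverse M)"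
  unfolding mp_inverse_def
  using moore_penrose_exists[OF assms] moore_penrose_unique by (metis theI)

lemma mp_inverse_carrier:
  assumes "M \<in> carrier_mat r c"
  shows "mp_inverse M \<in> carrier_mat c r"
  using mp_inverse_is_moore_penrose[OF assms] assms unfolding is_moore_penrose_def by simp

lemma mult_mp_inverse_mult:
  assumes "M \<in> carrier_mat r c"
  shows "M * mp_inverse M * M = M" and "mp_inverse M * M * mp_inverse M = mp_inverse M"
    and "(mp_inverse M * M)\<^sup>T = mp_inverse M * M"
  using mp_inverse_is_moore_penrose[OF assms] unfolding is_moore_penrose_def by blast+

lemma mult_mp_inverse_mult_vec_of_range:
  assumes P: "P \<in> carrier_mat r c" and w: "w \<in> mat_range P"
  shows "P *\<^sub>v (mp_inverse P *\<^sub>v w) = w"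
proof -
  obtain x where x: "x \<in> carrier_vec c" and w_eq: "w = P *\<^sub>v x"
    using w P unfolding mat_range_def by auto
  have "P *\<^sub>v (mp_inverse P *\<^sub>v w) = (P * mp_inverse P * P) *\<^sub>v x"
    unfolding w_eq using P x mp_inverse_carrier[OF P]
    by (simp add: assoc_mult_mat_vec_dim carrier_matD carrier_vecD)
  thus ?thesis using mult_mp_inverse_mult(1)[OF P] w_eq by simp
qed

lemma mult_mp_inverse_mult_of_range_subset:
  assumes P: "P \<in> carrier_mat r c" and M: "M \<in> carrier_mat r k"
    and range: "mat_range M \<subseteq> mat_range P"
  shows "P * mp_inverse P * M = M"
proof (rule eq_mat_mult_vecI)
  fix x :: "real vec" assume x: "x \<in> carrier_vec k"
  hence "M *\<^sub>v x \<in> mat_range P" using range M unfolding mat_range_def by auto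
  thus "(P * mp_inverse P * M) *\<^sub>v x = M *\<^sub>v x"
    using mult_mp_inverse_mult_vec_of_range[OF P] P M x mp_inverse_carrier[OF P]
    by (simp add: assoc_mult_mat_vec_dim carrier_matD carrier_vecD)
qed (use P M mp_inverse_carrier[OF P] in auto)

lemma mult_mp_inverse_mult_of_null_subset:
  assumes P: "P \<in> carrier_mat r c" and S: "S \<in> carrier_mat k c"
    and null: "mat_null P \<subseteq> mat_null S"
  shows "S * mp_inverse P * P = S"
proof (rule eq_mat_mult_vecI)
  fix x :: "real vec" assume x: "x \<in> carrier_vec c"
  have X: "mp_inverse P \<in> carrier_mat c r" by (rule mp_inverse_carrier[OF P])
  define y where "y = x - mp_inverse P *\<^sub>v (P *\<^sub>v x)"
  have y: "y \<in> carrier_vec c" unfolding y_def using x X P by auto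
  have "P *\<^sub>v y = P *\<^sub>v x - (P * mp_inverse P * P) *\<^sub>v x"
    unfolding y_def using P X x
    by (simp add: mult_minus_distrib_mat_vec[of P r c] assoc_mult_mat_vec_dim carrier_matD carrier_vecD)
  hence "y \<in> mat_null P"
    using mult_mp_inverse_mult(1)[OF P] P x y unfolding mat_null_def mat_kernel_def by auto
  hence "S *\<^sub>v y = 0\<^sub>v k" using null S unfolding mat_null_def mat_kernel_def by auto
  hence "S *\<^sub>v x - S *\<^sub>v (mp_inverse P *\<^sub>v (P *\<^sub>v x)) = 0\<^sub>v k"
    unfolding y_def using S X P x by (simp add: mult_minus_distrib_mat_vec[of S k c])
  hence "S *\<^sub>v x = S *\<^sub>v (mp_inverse P *\<^sub>v (P *\<^sub>v x))"
    using S X P x by (simp add: minus_vec_eq_0_iff[of _ k])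
  thus "(S * mp_inverse P * P) *\<^sub>v x = S *\<^sub>v x"
    using S X P x by (simp add: assoc_mult_mat_vec_dim carrier_matD carrier_vecD)
qed (use P S mp_inverse_carrier[OF P] in auto)

lemma mat_null_subset_mult:
  fixes M K :: "real mat"
  assumes M: "M \<in> carrier_mat r c" and K: "K \<in> carrier_mat k r"
  shows "mat_null M \<subseteq> mat_null (K * M)"
proof
  fix x assume "x \<in> mat_null M"
  hence x: "x \<in> carrier_vec c" and "M *\<^sub>v x = 0\<^sub>v r" using M unfolding mat_null_def mat_kernel_def by auto
  hence "K * M *\<^sub>v x = K *\<^sub>v 0\<^sub>v r" using M K by (simp add: assoc_mult_mat_vec[of _ k r _ c])
  also have "\<dots> = 0\<^sub>v k" using K by auto
  finally have "K * M *\<^sub>v x = 0\<^sub>v k" .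
  thus "x \<in> mat_null (K * M)" using x M K unfolding mat_null_def mat_kernel_def by auto
qed

lemma mp_inverse_mult_eq_of_null_eq:
  assumes M: "M \<in> carrier_mat r c" and N: "N \<in> carrier_mat r' c"
    and null: "mat_null M = mat_null N"
  shows "mp_inverse M * M = mp_inverse N * N"
proof -
  have X: "mp_inverse M \<in> carrier_mat c r" and Y: "mp_inverse N \<in> carrier_mat c r'"
    using mp_inverse_carrier M N by auto
  have null_N: "mat_null N \<subseteq> mat_null (mp_inverse M * M)"
    and null_M: "mat_null M \<subseteq> mat_null (mp_inverse N * N)"
    using mat_null_subset_mult X Y M N null by blast+
  \<comment> \<open>The orthogonal projections onto the row spaces of M and N absorb each other.\<close>
  have "mp_inverse M * M * mp_inverse N * N = mp_inverse M * M"
    by (rule mult_mp_inverse_mult_of_null_subset[OF N mult_carrier_mat[OF X M] null_N])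
  hence MN: "mp_inverse M * M * (mp_inverse N * N) = mp_inverse M * M"
    using X Y M N by (simp add: assoc_mult_mat_dim carrier_matD del: assoc_mult_mat)
  have "mp_inverse N * N * mp_inverse M * M = mp_inverse N * N"
    by (rule mult_mp_inverse_mult_of_null_subset[OF M mult_carrier_mat[OF Y N] null_M])
  hence NM: "mp_inverse N * N * (mp_inverse M * M) = mp_inverse N * N"
    using X Y M N by (simp add: assoc_mult_mat_dim carrier_matD del: assoc_mult_mat)
  have "mp_inverse M * M = (mp_inverse M * M * (mp_inverse N * N))\<^sup>T"
    using MN mult_mp_inverse_mult(3)[OF M] by simp
  also have "\<dots> = mp_inverse N * N * (mp_inverse M * M)"
    using mult_mp_inverse_mult(3)[OF M] mult_mp_inverse_mult(3)[OF N] X Y M N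
    by (simp add: transpose_mult_dim del: assoc_mult_mat)
  finally show ?thesis using NM by simp
qed

lemma fixed_vec_eq_0_if_1_notin_spectrum:
  fixes K :: "real mat"
  assumes K: "K \<in> carrier_mat m m" and sp: "1 \<notin> spectrum (cmat K)"
    and v: "v \<in> carrier_vec m" and fixed: "K *\<^sub>v v = v"
  shows "v = 0\<^sub>v m"
proof (rule ccontr)
  assume "v \<noteq> 0\<^sub>v m"
  hence "of_real_hom.vec_hom v \<noteq> 0\<^sub>v m" by simp
  moreover have "cmat K *\<^sub>v of_real_hom.vec_hom v = 1 \<cdot>\<^sub>v of_real_hom.vec_hom v"
    using of_real_hom.mult_mat_vec_hom[OF K v, symmetric] fixed unfolding cmat_def by simp
  ultimately have "eigenvector (cmat K) (of_real_hom.vec_hom v) 1"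
    using K v unfolding eigenvector_def cmat_def by auto
  thus False using sp unfolding spectrum_def eigenvalue_def by auto
qed

lemma mat_null_one_minus_mult:
  fixes K A :: "real mat"
  assumes K: "K \<in> carrier_mat m m" and A: "A \<in> carrier_mat m n"
    and sp: "1 \<notin> spectrum (cmat K)"
  shows "mat_null ((1\<^sub>m m - K) * A) = mat_null A"
proof -
  have "(1\<^sub>m m - K) * A *\<^sub>v x = 0\<^sub>v m \<longleftrightarrow> A *\<^sub>v x = 0\<^sub>v m" if x: "x \<in> carrier_vec n" for x
  proof -
    have Ax: "A *\<^sub>v x \<in> carrier_vec m" using A x by simp
    have "(1\<^sub>m m - K) * A *\<^sub>v x = (1\<^sub>m m - K) *\<^sub>v (A *\<^sub>v x)"
      using K A x by (intro assoc_mult_mat_vec[of _ m m]) auto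
    also have "\<dots> = A *\<^sub>v x - K *\<^sub>v (A *\<^sub>v x)"
      using K Ax by (subst minus_mult_distrib_mat_vec[of _ m m]) auto
    also have "\<dots> = 0\<^sub>v m \<longleftrightarrow> K *\<^sub>v (A *\<^sub>v x) = A *\<^sub>v x"
      using minus_vec_eq_0_iff[of "A *\<^sub>v x" m "K *\<^sub>v (A *\<^sub>v x)"] K Ax by auto
    also have "\<dots> \<longleftrightarrow> A *\<^sub>v x = 0\<^sub>v m"
      using fixed_vec_eq_0_if_1_notin_spectrum[OF K sp Ax] K by auto
    finally show ?thesis .
  qed
  moreover have "(1\<^sub>m m - K) * A \<in> carrier_mat m n" using K A by auto
  ultimately show ?thesis unfolding mat_null_def mat_kernel[OF A] by (auto simp: mat_kernel)
qed

lemma mat_range_one_minus_mult_subset: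
  fixes A S X P :: "real mat"
  assumes A: "A \<in> carrier_mat m n" and S: "S \<in> carrier_mat m k" and X: "X \<in> carrier_mat k m"
    and P: "P \<in> carrier_mat m c"
    and A_range: "mat_range A \<subseteq> mat_range P" and S_range: "mat_range S \<subseteq> mat_range P"
  shows "mat_range ((1\<^sub>m m - S * X) * A) \<subseteq> mat_range P"
proof
  fix w assume "w \<in> mat_range ((1\<^sub>m m - S * X) * A)"
  then obtain x where x: "x \<in> carrier_vec n" and w: "w = (1\<^sub>m m - S * X) * A *\<^sub>v x"
    using A unfolding mat_range_def by auto
  have "A *\<^sub>v x \<in> mat_range P" using A_range A x unfolding mat_range_def by auto
  then obtain a where a: "a \<in> carrier_vec c" "A *\<^sub>v x = P *\<^sub>v a"
    using P unfolding mat_range_def by auto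
  have "X *\<^sub>v (A *\<^sub>v x) \<in> carrier_vec k" using X A x by simp
  hence "S *\<^sub>v (X *\<^sub>v (A *\<^sub>v x)) \<in> mat_range S"
    unfolding mat_range_def carrier_matD(2)[OF S] by blast
  hence "S *\<^sub>v (X *\<^sub>v (A *\<^sub>v x)) \<in> mat_range P" using S_range by blast
  then obtain b where b: "b \<in> carrier_vec c" "S *\<^sub>v (X *\<^sub>v (A *\<^sub>v x)) = P *\<^sub>v b"
    using P unfolding mat_range_def by auto
  have "w = (1\<^sub>m m - S * X) *\<^sub>v (A *\<^sub>v x)"
    unfolding w using A S X x by (intro assoc_mult_mat_vec[of _ m m]) auto
  also have "\<dots> = A *\<^sub>v x - S *\<^sub>v (X *\<^sub>v (A *\<^sub>v x))"
    using A S X x by (subst minus_mult_distrib_mat_vec[of _ m m]) (auto simp: assoc_mult_mat_vec[of _ m k])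
  also have "\<dots> = P *\<^sub>v (a - b)" using a b P by (simp add: mult_minus_distrib_mat_vec[of _ m c])
  finally show "w \<in> mat_range P" using a b P unfolding mat_range_def by auto
qed

lemma mat_nonpos_mult_nonneg:
  assumes "mat_nonpos M" and "mat_nonneg N" and "dim_col M = dim_row N"
  shows "mat_nonpos (M * N)"
  using assms unfolding mat_nonpos_def mat_nonneg_def
  by (auto simp: scalar_prod_def intro!: sum_nonpos mult_nonpos_nonneg)

lemma mat_nonneg_mult_nonpos_nonpos:
  assumes "mat_nonpos M" and "mat_nonpos N" and "dim_col M = dim_row N"
  shows "mat_nonneg (M * N)"
  using assms unfolding mat_nonpos_def mat_nonneg_def
  by (auto simp: scalar_prod_def intro!: sum_nonneg mult_nonpos_nonpos)

lemma mat_nonneg_minus_nonpos: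
  assumes "M \<in> carrier_mat r c" and "N \<in> carrier_mat r c" and "mat_nonneg M" and "mat_nonpos N"
  shows "mat_nonneg (M - N)"
  using assms unfolding mat_nonpos_def mat_nonneg_def by (fastforce intro: order_trans)

lemma mat_nonneg_add:
  assumes "M \<in> carrier_mat r c" and "N \<in> carrier_mat r c" and "mat_nonneg M" and "mat_nonneg N"
  shows "mat_nonneg (M + N)"
  using assms unfolding mat_nonneg_def by auto

lemma mult_mat_vec_mono:
  fixes M :: "real mat"
  assumes "mat_nonneg M" and "v \<le> w" and "w \<in> carrier_vec (dim_col M)"
  shows "M *\<^sub>v v \<le> M *\<^sub>v w"
  using assms unfolding mat_nonneg_def less_eq_vec_def
  by (auto simp: scalar_prod_def intro!: sum_mono mult_left_mono)

lemma nonneg_vec_eq_0_if_le_mult: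
  fixes D T Q :: "real mat"
  assumes D: "D \<in> carrier_mat n n" and T: "T \<in> carrier_mat n n" and Q: "Q \<in> carrier_mat n n"
    and D_nonneg: "mat_nonneg D" and T_nonneg: "mat_nonneg T"
    and TD: "T * D = T - Q" and QD: "Q * D = D"
    and y: "y \<in> carrier_vec n" and y_nonneg: "0\<^sub>v n \<le> y" and y_le: "y \<le> D *\<^sub>v y"
  shows "y = 0\<^sub>v n"
proof -
  define w where "w = D *\<^sub>v y"
  have w: "w \<in> carrier_vec n" unfolding w_def using D y by simp
  have "w \<le> D *\<^sub>v w" unfolding w_def using mult_mat_vec_mono[OF D_nonneg y_le] D y by simp
  hence "T *\<^sub>v w \<le> T *\<^sub>v (D *\<^sub>v w)" using mult_mat_vec_mono[OF T_nonneg] T D w by simp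
  also have "T *\<^sub>v (D *\<^sub>v w) = T *\<^sub>v w - Q *\<^sub>v w"
    using TD T D Q w by (simp add: assoc_mult_mat_vec[symmetric, of _ n n _ n] minus_mult_distrib_mat_vec)
  also have "Q *\<^sub>v w = w"
    unfolding w_def using QD Q D y by (simp add: assoc_mult_mat_vec[symmetric, of _ n n _ n])
  finally have "w \<le> 0\<^sub>v n" using T w unfolding less_eq_vec_def by auto
  hence "y \<le> 0\<^sub>v n" using y_le unfolding w_def by (rule order_trans[rotated])
  thus ?thesis using y_nonneg by (rule antisym)
qed

lemma proper_splitting_subinvariant_vec_eq_0:
  fixes Ah P :: "real mat"
  assumes Ah: "Ah \<in> carrier_mat m n" and P: "P \<in> carrier_mat m n"
    and range: "mat_range Ah \<subseteq> mat_range P" and null: "mat_null Ah = mat_null P"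
    and T_nonneg: "mat_nonneg (mp_inverse Ah * P)"
    and D_nonneg: "mat_nonneg (mp_inverse P * (P - Ah))"
    and y: "y \<in> carrier_vec n" "0\<^sub>v n \<le> y" "y \<le> mp_inverse P * (P - Ah) *\<^sub>v y"
  shows "y = 0\<^sub>v n"
proof -
  define X Xh where "X = mp_inverse P" and "Xh = mp_inverse Ah"
  have X: "X \<in> carrier_mat n m" and Xh: "Xh \<in> carrier_mat n m"
    unfolding X_def Xh_def using mp_inverse_carrier Ah P by auto
  have PXAh: "P * X * Ah = Ah" unfolding X_def by (rule mult_mp_inverse_mult_of_range_subset[OF P Ah range])
  have XhAh: "Xh * Ah = X * P" unfolding X_def Xh_def by (rule mp_inverse_mult_eq_of_null_eq[OF Ah P null])
  have PXP: "P * X * P = P" and XPX: "X * P * X = X" unfolding X_def using mult_mp_inverse_mult[OF P] by auto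
  have D_eq: "X * (P - Ah) = X * P - X * Ah" using X P Ah by (simp add: mult_minus_distrib_mat[of _ n m])
  have "Xh * P * (X * (P - Ah)) = Xh * P * (X * P) - Xh * P * (X * Ah)"
    unfolding D_eq using Xh X P Ah by (intro mult_minus_distrib_mat[of _ n n]) auto
  also have "\<dots> = Xh * (P * X * P) - Xh * (P * X * Ah)"
    using Xh X P Ah by (simp add: assoc_mult_mat_dim carrier_matD del: assoc_mult_mat)
  finally have TD: "Xh * P * (X * (P - Ah)) = Xh * P - X * P" using PXP PXAh XhAh by simp
  have "X * P * (X * (P - Ah)) = X * P * (X * P) - X * P * (X * Ah)"
    unfolding D_eq using X P Ah by (intro mult_minus_distrib_mat[of _ n n]) auto
  also have "\<dots> = (X * P * X) * P - (X * P * X) * Ah"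
    using X P Ah by (simp add: assoc_mult_mat_dim carrier_matD del: assoc_mult_mat)
  finally have QD: "X * P * (X * (P - Ah)) = X * (P - Ah)" using XPX D_eq by simp
  show ?thesis
    by (rule nonneg_vec_eq_0_if_le_mult[OF _ _ _ _ _ TD QD])
      (use X Xh P Ah D_nonneg T_nonneg y in \<open>auto simp: X_def Xh_def\<close>)
qed

lemma norm_cmat_mult_vec_le:
  fixes B :: "real mat" and z :: "complex vec"
  assumes B: "B \<in> carrier_mat r c" and B_nonneg: "mat_nonneg B"
    and z: "z \<in> carrier_vec c" and i: "i < r"
  shows "norm ((cmat B *\<^sub>v z) $ i) \<le> (B *\<^sub>v map_vec norm z) $ i"
proof -
  have "norm ((cmat B *\<^sub>v z) $ i) = norm (\<Sum>j\<in>{0..<c}. complex_of_real (B $$ (i,j)) * z $ j)"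
    using B z i by (simp add: cmat_def scalar_prod_def)
  also have "\<dots> \<le> (\<Sum>j\<in>{0..<c}. B $$ (i,j) * norm (z $ j))"
    by (rule order_trans[OF norm_sum])
      (use B_nonneg B i in \<open>auto simp: mat_nonneg_def norm_mult intro!: sum_mono\<close>)
  also have "\<dots> = (B *\<^sub>v map_vec norm z) $ i" using B z i by (simp add: scalar_prod_def)
  finally show ?thesis .
qed

lemma companion_eigenvector_blocks:
  fixes B C :: "real mat"
  assumes B: "B \<in> carrier_mat n n" and C: "C \<in> carrier_mat n n"
    and ev: "eigenvector (cmat (four_block_mat B C (1\<^sub>m n) (0\<^sub>m n n))) z lam"
  obtains z1 z2 where "z1 \<in> carrier_vec n" "z2 \<in> carrier_vec n" "z = z1 @\<^sub>v z2" "z \<noteq> 0\<^sub>v (n + n)"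
    "cmat B *\<^sub>v z1 + cmat C *\<^sub>v z2 = lam \<cdot>\<^sub>v z1" "z1 = lam \<cdot>\<^sub>v z2"
proof -
  let ?W = "cmat (four_block_mat B C (1\<^sub>m n) (0\<^sub>m n n))"
  have W: "?W = four_block_mat (cmat B) (cmat C) (1\<^sub>m n) (0\<^sub>m n n)"
    unfolding cmat_def using B C by (subst map_four_block_mat[of _ n n _ n _ n]) auto
  have z: "z \<in> carrier_vec (n + n)" and z0: "z \<noteq> 0\<^sub>v (n + n)" and Wz: "?W *\<^sub>v z = lam \<cdot>\<^sub>v z"
    using ev B unfolding eigenvector_def cmat_def by auto
  define z1 z2 where "z1 = vec_first z n" and "z2 = vec_last z n"
  have z1: "z1 \<in> carrier_vec n" and z2: "z2 \<in> carrier_vec n" and z_eq: "z = z1 @\<^sub>v z2"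
    unfolding z1_def z2_def using z by auto
  have "(cmat B *\<^sub>v z1 + cmat C *\<^sub>v z2) @\<^sub>v z1 = ?W *\<^sub>v z"
    unfolding W z_eq using B C z1 z2 by (subst four_block_mat_mult_vec) (auto simp: cmat_def)
  also have "\<dots> = lam \<cdot>\<^sub>v z" by (rule Wz)
  also have "\<dots> = (lam \<cdot>\<^sub>v z1) @\<^sub>v (lam \<cdot>\<^sub>v z2)" unfolding z_eq by (intro eq_vecI) auto
  finally have "cmat B *\<^sub>v z1 + cmat C *\<^sub>v z2 = lam \<cdot>\<^sub>v z1" "z1 = lam \<cdot>\<^sub>v z2"
    using B C z1 z2 by (auto simp: append_vec_eq[of _ n] cmat_def)
  with z1 z2 z_eq z0 show ?thesis using that by blast
qed

lemma companion_eigenvector_moduli_subinvariant: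
  fixes B C :: "real mat" and z1 z2 :: "complex vec"
  assumes B: "B \<in> carrier_mat n n" and C: "C \<in> carrier_mat n n"
    and B_nonneg: "mat_nonneg B" and C_nonneg: "mat_nonneg C"
    and z1: "z1 \<in> carrier_vec n" and z2: "z2 \<in> carrier_vec n" and lam: "1 \<le> norm lam"
    and top: "cmat B *\<^sub>v z1 + cmat C *\<^sub>v z2 = lam \<cdot>\<^sub>v z1" and bot: "z1 = lam \<cdot>\<^sub>v z2"
  shows "map_vec norm z1 \<le> (B + C) *\<^sub>v map_vec norm z1"
  unfolding less_eq_vec_def
proof (intro conjI allI impI)
  define u where "u = map_vec norm z1"
  have u: "u \<in> carrier_vec n" unfolding u_def using z1 by simp
  have z2_le: "map_vec norm z2 \<le> u"
    unfolding u_def bot less_eq_vec_def using z2 lam by (auto simp: norm_mult mult_le_cancel_right1)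
  fix i assume "i < dim_vec ((B + C) *\<^sub>v map_vec norm z1)"
  hence i: "i < n" using B C by simp
  have "u $ i \<le> norm lam * u $ i" using lam i z1 unfolding u_def by (simp add: mult_le_cancel_right1)
  also have "\<dots> = norm ((cmat B *\<^sub>v z1) $ i + (cmat C *\<^sub>v z2) $ i)"
    using arg_cong[OF top, of "\<lambda>v. norm (v $ i)"] i B C z1 z2 unfolding u_def
    by (simp add: norm_mult cmat_def)
  also have "\<dots> \<le> (B *\<^sub>v u) $ i + (C *\<^sub>v map_vec norm z2) $ i"
    using norm_cmat_mult_vec_le[OF B B_nonneg z1 i] norm_cmat_mult_vec_le[OF C C_nonneg z2 i]
    unfolding u_def by (intro order_trans[OF norm_triangle_ineq]) simp
  also have "\<dots> \<le> (B *\<^sub>v u) $ i + (C *\<^sub>v u) $ i"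
    using mult_mat_vec_mono[OF C_nonneg z2_le] C u i unfolding less_eq_vec_def by simp
  also have "\<dots> = ((B + C) *\<^sub>v u) $ i" using B C u i by (simp add: add_mult_distrib_mat_vec)
  finally show "map_vec norm z1 $ i \<le> ((B + C) *\<^sub>v map_vec norm z1) $ i" unfolding u_def .
qed (use B C z1 in simp)

lemma companion_eigenvalue_norm_lt_1:
  fixes B C :: "real mat"
  assumes B: "B \<in> carrier_mat n n" and C: "C \<in> carrier_mat n n"
    and B_nonneg: "mat_nonneg B" and C_nonneg: "mat_nonneg C"
    and subinv: "\<And>y. y \<in> carrier_vec n \<Longrightarrow> 0\<^sub>v n \<le> y \<Longrightarrow> y \<le> (B + C) *\<^sub>v y \<Longrightarrow> y = 0\<^sub>v n"
    and ev: "eigenvector (cmat (four_block_mat B C (1\<^sub>m n) (0\<^sub>m n n))) z lam"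
  shows "norm lam < 1"
proof (rule ccontr)
  assume "\<not> norm lam < 1"
  hence lam: "1 \<le> norm lam" by simp
  obtain z1 z2 where z1: "z1 \<in> carrier_vec n" and z2: "z2 \<in> carrier_vec n"
    and z: "z = z1 @\<^sub>v z2" "z \<noteq> 0\<^sub>v (n + n)"
    and top: "cmat B *\<^sub>v z1 + cmat C *\<^sub>v z2 = lam \<cdot>\<^sub>v z1" and bot: "z1 = lam \<cdot>\<^sub>v z2"
    using companion_eigenvector_blocks[OF B C ev] by blast
  have moduli: "map_vec norm z1 = 0\<^sub>v n"
    using companion_eigenvector_moduli_subinvariant[OF B C B_nonneg C_nonneg z1 z2 lam top bot]
      subinv[of "map_vec norm z1"] z1 unfolding less_eq_vec_def by simp
  have z1_0: "z1 $ i = 0" if "i < n" for i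
    using arg_cong[OF moduli, of "\<lambda>v. v $ i"] that z1 by simp
  have "lam \<noteq> 0" using lam by auto
  hence z2_0: "z2 $ i = 0" if "i < n" for i
    using arg_cong[OF bot, of "\<lambda>v. v $ i"] z1_0[OF that] that z2 by simp
  have "z = 0\<^sub>v (n + n)" unfolding z(1) using z1 z2 z1_0 z2_0 by (intro eq_vecI) auto
  thus False using z(2) by simp
qed

lemma spectral_radius_companion_lt_1:
  fixes B C :: "real mat"
  assumes B: "B \<in> carrier_mat n n" and C: "C \<in> carrier_mat n n" and n: "0 < n"
    and "mat_nonneg B" and "mat_nonneg C"
    and "\<And>y. y \<in> carrier_vec n \<Longrightarrow> 0\<^sub>v n \<le> y \<Longrightarrow> y \<le> (B + C) *\<^sub>v y \<Longrightarrow> y = 0\<^sub>v n"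
  shows "spectral_radius (cmat (four_block_mat B C (1\<^sub>m n) (0\<^sub>m n n))) < 1"
proof -
  let ?W = "cmat (four_block_mat B C (1\<^sub>m n) (0\<^sub>m n n))"
  have "?W \<in> carrier_mat (n + n) (n + n)" using B C unfolding cmat_def by auto
  hence "spectral_radius ?W \<in> norm ` spectrum ?W" using spectral_radius_mem_max(1) n by simp
  then obtain lam where "lam \<in> spectrum ?W" and radius: "spectral_radius ?W = norm lam" by blast
  then obtain z where "eigenvector ?W z lam" unfolding spectrum_def eigenvalue_def by auto
  thus ?thesis using companion_eigenvalue_norm_lt_1[OF assms(1,2,4-6)] radius by simp
qed

lemma double_proper_weak_splittingD:
  assumes "double_proper_weak_splitting A P R S" and "A \<in> carrier_mat m n"
  shows "P \<in> carrier_mat m n" "R \<in> carrier_mat m n" "S \<in> carrier_mat m n" "A = P - R + S"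
    "mat_range P = mat_range A" "mat_null P = mat_null A"
    "mat_nonneg (mp_inverse P * R)" "mat_nonpos (mp_inverse P * S)"
  using assms unfolding double_proper_weak_splitting_def double_proper_splitting_def by auto

lemma double_splitting_blocks_sum:
  fixes A P1 R1 S1 P2 R2 S2 X1 X :: "real mat"
  assumes carrier: "A \<in> carrier_mat m n" "P1 \<in> carrier_mat m n" "R1 \<in> carrier_mat m n"
    "S1 \<in> carrier_mat m n" "P2 \<in> carrier_mat m n" "R2 \<in> carrier_mat m n" "S2 \<in> carrier_mat m n"
    "X1 \<in> carrier_mat n m" "X \<in> carrier_mat n m"
    and A1: "A = P1 - R1 + S1" and A2: "A = P2 - R2 + S2" and S2X1P1: "S2 * X1 * P1 = S2"
  shows "(X * R2 - X * S2 * X1 * R1) + X * S2 * X1 * S1 = X * (P2 - (1\<^sub>m m - S2 * X1) * A)"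
proof -
  have K: "S2 * X1 \<in> carrier_mat m m" using carrier by auto
  have "(1\<^sub>m m - S2 * X1) * A = A - S2 * X1 * A"
    using carrier K by (subst minus_mult_distrib_mat[of _ m m]) auto
  also have "S2 * X1 * A = S2 * X1 * (P1 - R1) + S2 * X1 * S1"
    unfolding A1 using carrier K by (intro mult_add_distrib_mat[of _ m m]) auto
  also have "S2 * X1 * (P1 - R1) = S2 * X1 * P1 - S2 * X1 * R1"
    using carrier K by (intro mult_minus_distrib_mat[of _ m m]) auto
  finally have "P2 - (1\<^sub>m m - S2 * X1) * A = R2 - S2 * X1 * R1 + S2 * X1 * S1"
    unfolding S2X1P1 using carrier K A2 by (intro eq_matI) auto
  hence "X * (P2 - (1\<^sub>m m - S2 * X1) * A) = X * (R2 - S2 * X1 * R1) + X * (S2 * X1 * S1)"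
    using carrier by (simp only:) (intro mult_add_distrib_mat[of _ n m], auto)
  also have "X * (R2 - S2 * X1 * R1) = X * R2 - X * (S2 * X1 * R1)"
    using carrier by (intro mult_minus_distrib_mat[of _ n m]) auto
  finally show ?thesis
    using carrier by (simp add: assoc_mult_mat_dim carrier_matD del: assoc_mult_mat)
qed

lemma double_splitting_blocks_nonneg:
  fixes R1 S1 R2 S2 X1 X2 :: "real mat"
  assumes carrier: "R1 \<in> carrier_mat m n" "S1 \<in> carrier_mat m n" "R2 \<in> carrier_mat m n"
    "S2 \<in> carrier_mat m n" "X1 \<in> carrier_mat n m" "X2 \<in> carrier_mat n m"
    and X1R1: "mat_nonneg (X1 * R1)" and X1S1: "mat_nonpos (X1 * S1)"
    and X2R2: "mat_nonneg (X2 * R2)" and X2S2: "mat_nonpos (X2 * S2)"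
  shows "mat_nonneg (X2 * R2 - X2 * S2 * X1 * R1)" and "mat_nonneg (X2 * S2 * X1 * S1)"
proof -
  have XR: "X2 * R2 \<in> carrier_mat n n" and XSXR: "X2 * S2 * X1 * R1 \<in> carrier_mat n n"
    using carrier by (meson mult_carrier_mat)+
  have "mat_nonpos (X2 * S2 * X1 * R1)" and "mat_nonneg (X2 * S2 * X1 * S1)"
    using mat_nonpos_mult_nonneg[OF X2S2 X1R1] mat_nonneg_mult_nonpos_nonpos[OF X2S2 X1S1] carrier
    by (simp_all add: assoc_mult_mat_dim del: assoc_mult_mat)
  thus "mat_nonneg (X2 * R2 - X2 * S2 * X1 * R1)" and "mat_nonneg (X2 * S2 * X1 * S1)"
    using mat_nonneg_minus_nonpos[OF XR XSXR X2R2] by simp_all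
qed

theorem theorem3p2:
  fixes A P1 R1 S1 P2 R2 S2 :: "real mat" and m n :: nat
  assumes "0 < m" and "0 < n"
    and "A \<in> carrier_mat m n"
    and "double_proper_weak_splitting A P1 R1 S1"
    and "double_proper_weak_splitting A P2 R2 S2"
    and "mat_nonneg (mp_inverse ((1\<^sub>m m - S2 * mp_inverse P1) * A) * P2)"
    and "mat_null P2 \<subseteq> mat_null S2"
    and "mat_range S2 \<subseteq> mat_range P2"
    and "1 \<notin> spectrum (cmat (S2 * mp_inverse P1))"
  shows "spectral_radius (cmat (four_block_mat
            (mp_inverse P2 * R2 - mp_inverse P2 * S2 * mp_inverse P1 * R1)
            (mp_inverse P2 * S2 * mp_inverse P1 * S1)
            (1\<^sub>m n) (0\<^sub>m n n))) < 1"
proof -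
  note A = assms(3)
  note split1 = double_proper_weak_splittingD[OF assms(4) A]
  note split2 = double_proper_weak_splittingD[OF assms(5) A]
  define X1 X2 Ah where "X1 = mp_inverse P1" and "X2 = mp_inverse P2"
    and "Ah = (1\<^sub>m m - S2 * X1) * A"
  have X1: "X1 \<in> carrier_mat n m" and X2: "X2 \<in> carrier_mat n m" and Ah: "Ah \<in> carrier_mat m n"
    unfolding X1_def X2_def Ah_def using mp_inverse_carrier split1 split2 A by auto
  have "S2 * X1 * P1 = S2" unfolding X1_def
    using mult_mp_inverse_mult_of_null_subset[OF split1(1) split2(3)] split1 split2 assms(7) by simp
  hence sum: "(X2 * R2 - X2 * S2 * X1 * R1) + X2 * S2 * X1 * S1 = X2 * (P2 - Ah)"
    unfolding Ah_def by (intro double_splitting_blocks_sum) (use A X1 X2 split1 split2 in auto)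
  have B: "X2 * R2 - X2 * S2 * X1 * R1 \<in> carrier_mat n n" and C: "X2 * S2 * X1 * S1 \<in> carrier_mat n n"
    using X1 X2 split1 split2 by auto
  note nonneg = double_splitting_blocks_nonneg[OF split1(2,3) split2(2,3) X1 X2
      split1(7,8)[folded X1_def] split2(7,8)[folded X2_def]]
  have "mat_range Ah \<subseteq> mat_range P2" unfolding Ah_def
    using mat_range_one_minus_mult_subset[OF A split2(3) X1 split2(1)] split2 assms(8) by simp
  moreover have "mat_null Ah = mat_null P2" unfolding Ah_def
    using mat_null_one_minus_mult[of "S2 * X1" m A n] split2 X1 A assms(9) X1_def by simp
  moreover have "mat_nonneg (X2 * (P2 - Ah))" using mat_nonneg_add[OF B C nonneg] sum by simp
  ultimately have "y = 0\<^sub>v n" if "y \<in> carrier_vec n" "0\<^sub>v n \<le> y" "y \<le> X2 * (P2 - Ah) *\<^sub>v y" for y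
    using proper_splitting_subinvariant_vec_eq_0[OF Ah split2(1)] assms(6) that
    unfolding X2_def Ah_def X1_def by blast
  thus ?thesis
    using spectral_radius_companion_lt_1[OF B C assms(2) nonneg] sum unfolding X1_def X2_def by simp
qed

end
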